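(* Let $\omega=SSw$ be an attack cycle starting with two letters S, where $w=w_1\cdots w_\nu$ with $w_\nu=H$, and let $X_0=0$, $X_i=X_{i-1}+1$ if $w_i=S$ and $X_i=X_{i-1}-1$ if $w_i=H$. Define $$D(\omega)=\sum_{i}\,(X_i+3),$$ the sum being over all indices $1\le i\le\nu$ with $X_i<n_1-2$ and $X_i<X_{i-1}$. Then $$\mathbb{E}[D(\omega)\mid\omega=SS\ldots]=\frac{p}{(p-q)^2}\Bigl(2p-q-\bigl(p+n_1(p-q)\bigr)\Bigl(\frac qp\Bigr)^{n_1-1}\Bigr).$$
   Context: Honest hashrate $p$, attacker hashrate $q$, $p+q=1$, $0<q<p$; $n_1\ge2$ is an integer. The attack cycles starting with SS are the words $SSw'H$ with $w'$ a Dyck word over $\{S,H\}$ and $\mathbb{P}[SSw'H]=q^2p(pq)^{|w'|}$ ($|w'|$ half the length of $w'$); equivalently, conditional on starting with SS, $(X_i)$ is a random walk from $0$ with up-step probability $q$ and down-step probability $p$, stopped at its first visit to $-1$ (time $\nu$). (For an honest block at index $i$ of $w$, $X_i+2$ is its relative height, i.e. the height of the attacker's fork at its creation minus its own height, and $X_i+3$ is its distance to a nephew if it becomes an uncle.) *)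

theory Defs
  imports "HOL-Analysis.Analysis"
begin

text \<open>Words over {S,H} are bool lists: True = S (attacker block), False = H (honest block).\<close>

definition step :: "bool \<Rightarrow> int" where
  "step b = (if b then 1 else -1)"

definition walk :: "bool list \<Rightarrow> nat \<Rightarrow> int" where
  "walk w i = sum_list (map step (take i w))"

definition dyck :: "bool list \<Rightarrow> bool" where
  "dyck w \<longleftrightarrow> (\<forall>i\<le>length w. walk w i \<ge> 0) \<and> walk w (length w) = 0"

definition Dsum :: "nat \<Rightarrow> bool list \<Rightarrow> real" where
  "Dsum n1 w = (\<Sum>i\<in>{1..length w}.
      if walk w i < int n1 - 2 \<and> walk w i < walk w (i - 1)
      then real_of_int (walk w i + 3) else 0)"

text \<open>Conditional probability of the attack cycle SS w' H given that it starts with SS: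
  P[SSw'H] / q^2 = p (pq)^{|w'|}, |w'| = half length of w'.\<close>
definition cond_prob :: "real \<Rightarrow> real \<Rightarrow> bool list \<Rightarrow> real" where
  "cond_prob p q w' = p * (p * q) ^ (length w' div 2)"

end

theory Submission
  imports Defs
begin

text \<open>Conditioned on starting with SS, a cycle is SS w H with w a Dyck word of weight
  P(w) = p (pq)^(|w| div 2), and every nonempty Dyck word factors uniquely as S u H v with Dyck
  words u, v, where P(S u H v) = q P(u) P(v). Summing over this factorization, the total weight W
  satisfies W = p + q W^2, whence W = 1; and if an H step of w ending at level l costs c(h + l),
  the expected total cost E(h) satisfies p E(h) = q (E(h + 1) + c(h)). With c(l) = l + 3 below
  n1 - 2 and 0 from there on, E(n1 - 2) = 0, and unrolling gives
  E(0) = sum over k < n1 - 2 of (q/p)^(k+1) (k + 3). The final H step adds 2, and this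
  arithmetic-geometric sum has the stated closed form.\<close>

lemma has_sum_mult_Times:
  fixes f :: "'a \<Rightarrow> real" and g :: "'b \<Rightarrow> real"
  assumes f: "(f has_sum a) A" and g: "(g has_sum b) B"
  shows "((\<lambda>(x, y). f x * g y) has_sum a * b) (A \<times> B)"
proof (rule has_sum_SigmaI)
  show "((\<lambda>y. case (x, y) of (x, y) \<Rightarrow> f x * g y) has_sum f x * b) B" for x
    using has_sum_cmult_right[OF g] by simp
  show "((\<lambda>x. f x * b) has_sum a * b) A"
    using has_sum_cmult_left[OF f] .
  have norm_f: "(\<lambda>x. norm (f x)) summable_on A" and norm_g: "(\<lambda>y. norm (g y)) summable_on B"
    using f g summable_on_iff_abs_summable_on_real by (auto dest: has_sum_imp_summable)
  have "(\<lambda>(x, y). norm (f x) * norm (g y)) summable_on A \<times> B"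
  proof (rule summable_on_SigmaI)
    show "((\<lambda>y. case (x, y) of (x, y) \<Rightarrow> norm (f x) * norm (g y)) has_sum
            norm (f x) * infsum (\<lambda>y. norm (g y)) B) B" for x
      using has_sum_cmult_right[OF has_sum_infsum[OF norm_g]] by simp
    show "(\<lambda>x. norm (f x) * infsum (\<lambda>y. norm (g y)) B) summable_on A"
      using summable_on_cmult_left[OF norm_f] .
  qed auto
  then have "Infinite_Sum.abs_summable_on (\<lambda>(x, y). f x * g y) (A \<times> B)"
    by (rule summable_on_cong[THEN iffD1, rotated]) (auto simp: abs_mult)
  then show "(\<lambda>(x, y). f x * g y) summable_on A \<times> B"
    by (rule abs_summable_summable)
qed

lemma summable_on_lists_by_length:
  fixes g :: "nat \<Rightarrow> real"
  assumes "\<And>n. 0 \<le> g n" "summable (\<lambda>n. 2 ^ n * g n)"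
  shows "(\<lambda>w::bool list. g (length w)) summable_on UNIV"
proof -
  have card: "card {w::bool list. length w = n} = 2 ^ n" for n
    using card_lists_length_eq[of "UNIV :: bool set" n] by simp
  have fin: "finite {w::bool list. length w = n}" for n
    using finite_lists_length_eq[of "UNIV :: bool set" n] by simp
  have "(\<lambda>w::bool list. g (length w)) summable_on (\<Union>n. {w. length w = n})"
  proof (rule summable_on_UnionI)
    show "((\<lambda>w::bool list. g (length w)) has_sum 2 ^ n * g n) {w. length w = n}" for n
      using has_sum_finite[OF fin, of "\<lambda>w. g (length w)"] by (simp add: card)
    show "(\<lambda>n. 2 ^ n * g n) summable_on UNIV"
      using assms by (simp add: summable_on_UNIV_nonneg_real_iff)
  qed (auto simp: assms disjoint_family_on_def)
  also have "(\<Union>n. {w::bool list. length w = n}) = UNIV"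
    by auto
  finally show ?thesis .
qed

lemma summable_power_half_length:
  fixes x :: real
  assumes "0 < x" "x < 1 / 4"
  shows "(\<lambda>w::bool list. x ^ (length w div 2) * (real (length w) + 1)) summable_on UNIV"
proof (rule summable_on_lists_by_length)
  define s where "s = sqrt x"
  have "sqrt x < sqrt (1 / 4)"
    using assms by simp
  then have s: "0 < s" "2 * s < 1" "x = s ^ 2"
    using assms by (auto simp: s_def real_sqrt_divide)
  have "summable (\<lambda>n. diffs (\<lambda>_. 1::real) n * (2 * s) ^ n)"
    by (rule termdiff_converges[where K = 1]) (use s in auto)
  then have majorant: "summable (\<lambda>n. (real n + 1) * (2 * s) ^ n / s)"
    by (intro summable_divide) (simp add: diffs_def add.commute)
  have bound: "2 ^ n * (x ^ (n div 2) * (real n + 1)) \<le> (real n + 1) * (2 * s) ^ n / s" for n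
  proof -
    have "x ^ (n div 2) * s = s ^ (2 * (n div 2) + 1)"
      using s by (simp add: power_mult)
    also have "\<dots> \<le> s ^ n"
      by (rule power_decreasing) (use s in auto)
    finally have "x ^ (n div 2) \<le> s ^ n / s"
      using s by (simp add: field_simps)
    then have "2 ^ n * (x ^ (n div 2) * (real n + 1)) \<le> 2 ^ n * (s ^ n / s * (real n + 1))"
      by (intro mult_left_mono mult_right_mono) auto
    also have "\<dots> = (real n + 1) * (2 * s) ^ n / s"
      by (simp add: power_mult_distrib)
    finally show ?thesis .
  qed
  show "summable (\<lambda>n. 2 ^ n * (x ^ (n div 2) * (real n + 1)))"
    by (rule summable_comparison_test'[OF majorant]) (use bound assms in auto)
qed (use assms in simp)

lemma backward_recurrence_unroll:
  fixes E c :: "int \<Rightarrow> real"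
  assumes "\<And>k. E k = r * (E (k + 1) + c k)"
  shows "E h = r ^ m * E (h + int m) + (\<Sum>k<m. r ^ Suc k * c (h + int k))"
proof (induction m)
  case (Suc m)
  with assms[of "h + int m"] show ?case
    by (simp add: algebra_simps)
qed simp

lemma weighted_geometric_sum:
  fixes p q :: real
  assumes "p \<noteq> 0" "p \<noteq> q"
  shows "2 + (\<Sum>k<m. (q / p) ^ Suc k * (real k + 3)) =
    p / (p - q)^2 * (2 * p - q - (p + (real m + 2) * (p - q)) * (q / p) ^ Suc m)"
proof (induction m)
  case 0
  have "2 * p - q - (p + 2 * (p - q)) * (q / p) = 2 * (p - q)^2 / p"
    using assms by (simp add: field_simps power2_eq_square)
  with assms show ?case
    by simp
next
  case (Suc m)
  let ?r = "q / p" and ?X = "p + (real m + 2) * (p - q)" and ?Y = "p + (real m + 3) * (p - q)"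
  have bracket: "?X - ?Y * ?r = (real m + 3) * (p - q)^2 / p"
    using assms by (simp add: field_simps power2_eq_square)
  \<comment> \<open>stated for a variable r, so that simp does not unfold the quotient q / p\<close>
  have "a * (x * r ^ Suc m - y * r ^ Suc (Suc m)) = a * (x - y * r) * r ^ Suc m" for a x y r :: real
    by (simp add: algebra_simps)
  then have "p / (p - q)^2 * (?X * ?r ^ Suc m - ?Y * ?r ^ Suc (Suc m)) =
      p / (p - q)^2 * (?X - ?Y * ?r) * ?r ^ Suc m" .
  also have "\<dots> = p / (p - q)^2 * ((real m + 3) * (p - q)^2 / p) * ?r ^ Suc m"
    by (simp only: bracket)
  also have "\<dots> = ?r ^ Suc m * (real m + 3)"
    using assms by (simp add: field_simps)
  finally have step: "?r ^ Suc m * (real m + 3) =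
      p / (p - q)^2 * (?X * ?r ^ Suc m - ?Y * ?r ^ Suc (Suc m))" ..
  have "2 + (\<Sum>k<Suc m. ?r ^ Suc k * (real k + 3)) =
      (2 + (\<Sum>k<m. ?r ^ Suc k * (real k + 3))) + ?r ^ Suc m * (real m + 3)"
    by simp
  also have "\<dots> = p / (p - q)^2 * (2 * p - q - ?X * ?r ^ Suc m)
      + p / (p - q)^2 * (?X * ?r ^ Suc m - ?Y * ?r ^ Suc (Suc m))"
    by (simp only: Suc.IH step)
  also have "\<dots> = p / (p - q)^2 * (2 * p - q - ?Y * ?r ^ Suc (Suc m))"
    by (simp only: flip: distrib_left) simp
  finally show ?case
    by (simp add: add.assoc)
qed

section \<open>Dyck words and their first-return decomposition\<close>

lemma walk_0 [simp]: "walk w 0 = 0"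
  by (simp add: walk_def)

lemma walk_Cons_Suc [simp]: "walk (b # w) (Suc i) = step b + walk w i"
  by (simp add: walk_def)

lemma walk_length: "walk w (length w) = sum_list (map step w)"
  by (simp add: walk_def)

fun final_height :: "nat \<Rightarrow> bool list \<Rightarrow> nat option" where
  "final_height n [] = Some n"
| "final_height n (True # w) = final_height (Suc n) w"
| "final_height n (False # w) = (case n of 0 \<Rightarrow> None | Suc m \<Rightarrow> final_height m w)"

lemma final_height_append:
  "final_height n (u @ v) = Option.bind (final_height n u) (\<lambda>m. final_height m v)"
proof (induction u arbitrary: n)
  case (Cons b u)
  then show ?case by (cases b; cases n) auto
qed simp

lemma final_height_add:
  "final_height n u = Some m \<Longrightarrow> final_height (n + k) u = Some (m + k)"
proof (induction u arbitrary: n)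
  case (Cons b u)
  then show ?case by (cases b; cases n) (auto dest: Cons.IH[of "Suc _"])
qed simp

lemma final_height_eq_walk:
  "final_height n w = (if \<forall>i\<le>length w. 0 \<le> int n + walk w i
     then Some (nat (int n + walk w (length w))) else None)"
proof (induction w arbitrary: n)
  case (Cons b w)
  have all_Suc: "(\<forall>i\<le>Suc (length w). P i) \<longleftrightarrow> P 0 \<and> (\<forall>i\<le>length w. P (Suc i))" for P
    by (metis Suc_le_mono le0 not0_implies_Suc)
  show ?case
  proof (cases b)
    case True
    then show ?thesis using Cons[of "Suc n"] by (simp add: all_Suc step_def algebra_simps)
  next
    case False
    then show ?thesis
      using Cons[of "n - 1"] by (cases n) (auto simp: all_Suc step_def algebra_simps)
  qed
qed simp

lemma dyck_iff_final_height: "dyck w \<longleftrightarrow> final_height 0 w = Some 0"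
  unfolding dyck_def final_height_eq_walk by auto

lemma final_height_even: "final_height n w = Some m \<Longrightarrow> even (length w + n + m)"
proof (induction w arbitrary: n)
  case (Cons b w)
  then show ?case by (cases b; cases n) (fastforce dest: Cons.IH)+
qed simp

lemma final_height_Suc_split:
  "final_height (Suc n) w = Some 0 \<Longrightarrow>
     \<exists>u v. w = u @ False # v \<and> final_height 0 u = Some 0 \<and> final_height n v = Some 0"
proof (induction "length w" arbitrary: w n rule: less_induct)
  case less
  show ?case
  proof (cases w)
    case Nil
    with less.prems show ?thesis by simp
  next
    case (Cons b w')
    show ?thesis
    proof (cases b)
      case False
      with less.prems Cons show ?thesis by (intro exI[of _ "[]"] exI[of _ w']) simp
    next
      case True
      with less.prems Cons have "final_height (Suc (Suc n)) w' = Some 0" by simp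
      with less.hyps[of w' "Suc n"] Cons obtain u1 v1 where
        1: "w' = u1 @ False # v1" "final_height 0 u1 = Some 0" "final_height (Suc n) v1 = Some 0"
        by auto
      with less.hyps[of v1 n] Cons obtain u2 v2 where
        2: "v1 = u2 @ False # v2" "final_height 0 u2 = Some 0" "final_height n v2 = Some 0"
        by auto
      have "final_height 1 u1 = Some 1" using final_height_add[OF 1(2), of 1] by simp
      with 2 have "final_height 0 (True # u1 @ False # u2) = Some 0"
        by (simp add: final_height_append)
      with 1 2 Cons True show ?thesis
        by (intro exI[of _ "True # u1 @ False # u2"] exI[of _ v2]) auto
    qed
  qed
qed

abbreviation dyck_words :: "bool list set" where
  "dyck_words \<equiv> {w. dyck w}"

definition arch :: "bool list \<Rightarrow> bool list \<Rightarrow> bool list" where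
  "arch u v = True # u @ False # v"

lemma dyck_Nil: "dyck []"
  by (simp add: dyck_iff_final_height)

lemma dyck_arch: "dyck u \<Longrightarrow> dyck v \<Longrightarrow> dyck (arch u v)"
  using final_height_add[of 0 u 0 1]
  by (simp add: dyck_iff_final_height arch_def final_height_append)

lemma dyck_cases:
  assumes "dyck w"
  obtains "w = []" | u v where "dyck u" "dyck v" "w = arch u v"
proof (cases w)
  case (Cons b w')
  with assms have "b" and "final_height 1 w' = Some 0"
    by (cases b; simp add: dyck_iff_final_height)+
  with final_height_Suc_split[of 0 w'] Cons that(2) show ?thesis
    by (auto simp: dyck_iff_final_height arch_def)
qed (use that in simp)

lemma arch_eq_arch_iff:
  assumes "dyck u" "dyck u'"
  shows "arch u v = arch u' v' \<longleftrightarrow> u = u' \<and> v = v'"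
proof
  assume eq: "arch u v = arch u' v'"
  have no_prefix: "u \<noteq> u' @ False # r" if "dyck u" "dyck u'" for u u' r
    using that by (auto simp: dyck_iff_final_height final_height_append)
  from eq obtain r where "u = u' @ r \<and> r @ False # v = False # v' \<or> u' = u @ r \<and> False # v = r @ False # v'"
    by (auto simp: arch_def append_eq_append_conv2)
  with no_prefix[OF assms] no_prefix[OF assms(2,1)] have "u = u'"
    by (cases r) auto
  with eq show "u = u' \<and> v = v'" by (simp add: arch_def)
qed simp

lemma dyck_words_first_return: "dyck_words = insert [] (case_prod arch ` (dyck_words \<times> dyck_words))"
  by (auto simp: dyck_Nil dyck_arch elim: dyck_cases)

lemma has_sum_dyck_words_arch:
  fixes f :: "bool list \<Rightarrow> 'a::topological_comm_monoid_add"
  assumes "((\<lambda>(u, v). f (arch u v)) has_sum S) (dyck_words \<times> dyck_words)"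
  shows "(f has_sum (f [] + S)) dyck_words"
proof -
  have "inj_on (case_prod arch) (dyck_words \<times> dyck_words)"
    by (auto intro!: inj_onI simp: arch_eq_arch_iff)
  with assms have "(f has_sum S) (case_prod arch ` (dyck_words \<times> dyck_words))"
    by (simp add: has_sum_reindex comp_def case_prod_unfold)
  then have "(f has_sum (f [] + S)) (insert [] (case_prod arch ` (dyck_words \<times> dyck_words)))"
    by (rule has_sum_insert[rotated]) (auto simp: arch_def)
  then show ?thesis
    by (simp only: flip: dyck_words_first_return)
qed

lemma even_length_dyck: "dyck w \<Longrightarrow> even (length w)"
  using final_height_even[of 0 w 0] by (simp add: dyck_iff_final_height)

lemma sum_steps_dyck: "dyck w \<Longrightarrow> sum_list (map step w) = 0"
  by (simp add: dyck_def walk_length)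

fun down_cost :: "(int \<Rightarrow> real) \<Rightarrow> int \<Rightarrow> bool list \<Rightarrow> real" where
  "down_cost c h [] = 0"
| "down_cost c h (b # w) = (if b then 0 else c (h - 1)) + down_cost c (h + step b) w"

lemma down_cost_append:
  "down_cost c h (u @ v) = down_cost c h u + down_cost c (h + sum_list (map step u)) v"
  by (induction u arbitrary: h) (auto simp: algebra_simps)

lemma down_cost_arch:
  "dyck u \<Longrightarrow> down_cost c h (arch u v) = down_cost c (h + 1) u + c h + down_cost c h v"
  by (simp add: arch_def down_cost_append sum_steps_dyck step_def)

lemma abs_down_cost_le:
  assumes "\<And>k. \<bar>c k\<bar> \<le> B"
  shows "\<bar>down_cost c h w\<bar> \<le> B * length w"
proof (induction w arbitrary: h)
  case (Cons b w)
  have "\<bar>down_cost c h (b # w)\<bar> \<le> B + \<bar>down_cost c (h + step b) w\<bar>"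
    using assms[of "h - 1"] assms[of 0] by auto
  with Cons.IH[of "h + step b"] show ?case
    by (simp add: algebra_simps)
qed simp

lemma down_cost_eq_0:
  assumes "final_height n w \<noteq> None" "\<And>k. h - n \<le> k \<Longrightarrow> c k = 0"
  shows "down_cost c h w = 0"
  using assms
proof (induction w arbitrary: n h)
  case (Cons b w)
  show ?case
  proof (cases b)
    case True
    with Cons.prems show ?thesis by (simp add: step_def Cons.IH[of "Suc n"])
  next
    case False
    with Cons.prems obtain m where "n = Suc m" "final_height m w \<noteq> None"
      by (cases n) auto
    with False Cons.prems show ?thesis by (simp add: step_def Cons.IH[of m])
  qed
qed simp

lemma down_cost_eq_sum:
  "down_cost c h w =
     (\<Sum>i = 1..length w. if walk w i < walk w (i - 1) then c (h + walk w i) else 0)"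
proof (induction w arbitrary: h)
  case (Cons b w)
  let ?f = "\<lambda>i. if walk (b # w) i < walk (b # w) (i - 1) then c (h + walk (b # w) i) else 0"
  have "(\<Sum>i = 1..length (b # w). ?f i) = ?f 1 + (\<Sum>i = Suc 1..Suc (length w). ?f i)"
    using sum.atLeast_Suc_atMost[of 1 "length (b # w)" ?f] by simp
  also have "(\<Sum>i = Suc 1..Suc (length w). ?f i) = (\<Sum>i = 1..length w. ?f (Suc i))"
    by (rule sum.shift_bounds_cl_Suc_ivl)
  also have "(\<Sum>i = 1..length w. ?f (Suc i)) = down_cost c (h + step b) w"
    unfolding Cons.IH by (intro sum.cong) (auto simp: algebra_simps Suc_le_eq gr0_conv_Suc)
  finally show ?case by (simp add: step_def)
qed simp

lemma half_length_arch:
  "dyck u \<Longrightarrow> dyck v \<Longrightarrow> length (arch u v) div 2 = Suc (length u div 2 + length v div 2)"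
  using even_length_dyck[of u] even_length_dyck[of v] by (auto simp: arch_def elim!: evenE)

lemma cond_prob_arch:
  "dyck u \<Longrightarrow> dyck v \<Longrightarrow> cond_prob p q (arch u v) = q * cond_prob p q u * cond_prob p q v"
  by (simp add: cond_prob_def half_length_arch power_add algebra_simps)

text \<open>Of the two roots 1 and p/q of \<open>W = p + q W\<^sup>2\<close>, the second is excluded by the mean
  half-length M, which would have to satisfy \<open>M (1 - 2p) = p W > 0\<close>.\<close>

lemma dyck_weight_root:
  fixes p q W M :: real
  assumes "0 < q" "q < p" "p + q = 1"
    and W: "W = p + q * (W * W)" and M: "M = q * (W * W) + 2 * (q * W) * M" and "0 \<le> M"
  shows "W = 1"
proof -
  have "(W - 1) * (q * W - p) = q * (W * W) - (p + q) * W + p"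
    by (simp add: algebra_simps)
  with W assms(3) have "(W - 1) * (q * W - p) = 0"
    by simp
  moreover have "q * W \<noteq> p"
  proof
    assume qW: "q * W = p"
    then have "M * (1 - 2 * p) = p * W"
      using M by (simp add: algebra_simps)
    moreover have "0 < p * W"
      using qW assms by (auto simp: zero_less_mult_iff)
    moreover have "M * (1 - 2 * p) \<le> 0"
      using assms by (intro mult_nonneg_nonpos) auto
    ultimately show False
      by simp
  qed
  ultimately show ?thesis
    by simp
qed

definition mean_down_cost :: "real \<Rightarrow> real \<Rightarrow> (int \<Rightarrow> real) \<Rightarrow> int \<Rightarrow> real" where
  "mean_down_cost p q c h = (\<Sum>\<^sub>\<infinity>w\<in>dyck_words. cond_prob p q w * down_cost c h w)"

lemma mean_down_cost_eq_0:
  assumes "\<And>k. h \<le> k \<Longrightarrow> c k = 0"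
  shows "mean_down_cost p q c h = 0"
proof -
  have "down_cost c h w = 0" if "dyck w" for w
    using that assms by (intro down_cost_eq_0[of 0]) (auto simp: dyck_iff_final_height)
  then have "mean_down_cost p q c h = (\<Sum>\<^sub>\<infinity>w\<in>dyck_words. 0)"
    unfolding mean_down_cost_def by (intro infsum_cong) simp
  then show ?thesis
    by simp
qed

context
  fixes p q :: real
  assumes q_pos: "0 < q" and q_less_p: "q < p" and p_plus_q: "p + q = 1"
begin

lemma cond_prob_nonneg: "0 \<le> cond_prob p q w"
  using q_pos q_less_p by (simp add: cond_prob_def)

lemma summable_on_cond_prob_bounded:
  assumes "\<And>w. w \<in> A \<Longrightarrow> \<bar>f w\<bar> \<le> B * (cond_prob p q w * (real (length w) + 1))"
  shows "f summable_on A"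
proof -
  have "4 * (p * q) = (p + q)^2 - (p - q)^2"
    by (simp add: power2_eq_square algebra_simps)
  moreover have "0 < (p - q)^2" "(p + q)^2 = 1"
    using q_less_p p_plus_q by simp_all
  ultimately have "p * q < 1 / 4"
    by linarith
  with q_pos q_less_p
  have "(\<lambda>w::bool list. (p * q) ^ (length w div 2) * (real (length w) + 1)) summable_on A"
    using summable_on_subset[OF summable_power_half_length] by auto
  then have "(\<lambda>w. B * (cond_prob p q w * (real (length w) + 1))) summable_on A"
    by (intro summable_on_cmult_right) (simp add: cond_prob_def mult.assoc summable_on_cmult_right)
  then have "(\<lambda>w. norm (f w)) summable_on A"
    by (rule Infinite_Sum.abs_summable_on_comparison_test') (use assms in auto)
  then show ?thesis
    by (rule abs_summable_summable)
qed

lemma has_sum_cond_prob: "(cond_prob p q has_sum 1) dyck_words"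
proof -
  let ?P = "cond_prob p q"
  define W where "W = infsum ?P dyck_words"
  define M where "M = (\<Sum>\<^sub>\<infinity>w\<in>dyck_words. ?P w * real (length w div 2))"
  have "?P w \<le> ?P w * (real (length w) + 1)" for w
    using mult_left_mono[of 1 "real (length w) + 1" "?P w"] cond_prob_nonneg[of w] by simp
  then have hW: "(?P has_sum W) dyck_words"
    unfolding W_def
    by (intro has_sum_infsum summable_on_cond_prob_bounded[where B = 1]) (auto simp: cond_prob_nonneg)
  have "?P w * real (length w div 2) \<le> ?P w * (real (length w) + 1)" for w
    using cond_prob_nonneg[of w] by (intro mult_left_mono) auto
  then have hM: "((\<lambda>w. ?P w * real (length w div 2)) has_sum M) dyck_words"
    unfolding M_def
    by (intro has_sum_infsum summable_on_cond_prob_bounded[where B = 1]) (auto simp: cond_prob_nonneg)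
  have "((\<lambda>(u, v). ?P (arch u v)) has_sum q * (W * W)) (dyck_words \<times> dyck_words)"
    using has_sum_cmult_right[OF has_sum_mult_Times[OF hW hW], of q]
    by (rule has_sum_cong[THEN iffD1, rotated]) (auto simp: cond_prob_arch)
  from has_sum_unique[OF hW has_sum_dyck_words_arch[OF this]]
  have W_eq: "W = p + q * (W * W)"
    by (simp add: cond_prob_def)
  have "((\<lambda>(u, v). ?P (arch u v) * real (length (arch u v) div 2)) has_sum
          q * (W * W) + q * (M * W) + q * (W * M)) (dyck_words \<times> dyck_words)"
    using has_sum_add[OF has_sum_add[OF has_sum_cmult_right[OF has_sum_mult_Times[OF hW hW], of q]
        has_sum_cmult_right[OF has_sum_mult_Times[OF hM hW], of q]]
        has_sum_cmult_right[OF has_sum_mult_Times[OF hW hM], of q]]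
    by (rule has_sum_cong[THEN iffD1, rotated])
       (auto simp: cond_prob_arch half_length_arch algebra_simps)
  from has_sum_unique[OF hM has_sum_dyck_words_arch[OF this]]
  have M_eq: "M = q * (W * W) + 2 * (q * W) * M"
    by (simp add: algebra_simps)
  have "0 \<le> M"
    by (rule has_sum_nonneg[OF hM]) (simp add: cond_prob_nonneg)
  with W_eq M_eq have "W = 1"
    by (intro dyck_weight_root[OF q_pos q_less_p p_plus_q])
  with hW show ?thesis
    by simp
qed

lemma has_sum_mean_down_cost:
  assumes bound: "\<And>k. \<bar>c k\<bar> \<le> B"
  shows "((\<lambda>w. cond_prob p q w * down_cost c h w) has_sum mean_down_cost p q c h) dyck_words"
  unfolding mean_down_cost_def
proof (intro has_sum_infsum summable_on_cond_prob_bounded[where B = B])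
  fix w
  have "0 \<le> B"
    using bound[of 0] by (meson abs_ge_zero order_trans)
  then have "\<bar>down_cost c h w\<bar> \<le> B * (real (length w) + 1)"
    using abs_down_cost_le[of c B h w] bound by (simp add: algebra_simps)
  then have "cond_prob p q w * \<bar>down_cost c h w\<bar> \<le> cond_prob p q w * (B * (real (length w) + 1))"
    by (rule mult_left_mono) (rule cond_prob_nonneg)
  then show "\<bar>cond_prob p q w * down_cost c h w\<bar> \<le> B * (cond_prob p q w * (real (length w) + 1))"
    by (simp add: abs_mult cond_prob_nonneg algebra_simps)
qed

lemma mean_down_cost_recurrence:
  assumes "\<And>k. \<bar>c k\<bar> \<le> B"
  shows "p * mean_down_cost p q c h = q * (mean_down_cost p q c (h + 1) + c h)"
proof -
  let ?P = "cond_prob p q" and ?E = "mean_down_cost p q c"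
  have P: "(?P has_sum 1) dyck_words"
    by (rule has_sum_cond_prob)
  have E: "((\<lambda>w. ?P w * down_cost c k w) has_sum ?E k) dyck_words" for k
    using has_sum_mean_down_cost[OF assms] .
  have "((\<lambda>(u, v). ?P (arch u v) * down_cost c h (arch u v)) has_sum
          q * (?E (h + 1) * 1) + q * c h * (1 * 1) + q * (1 * ?E h)) (dyck_words \<times> dyck_words)"
    using has_sum_add[OF has_sum_add[OF has_sum_cmult_right[OF has_sum_mult_Times[OF E P], of q]
        has_sum_cmult_right[OF has_sum_mult_Times[OF P P], of "q * c h"]]
        has_sum_cmult_right[OF has_sum_mult_Times[OF P E], of q]]
    by (rule has_sum_cong[THEN iffD1, rotated])
       (auto simp: cond_prob_arch down_cost_arch algebra_simps)
  from has_sum_unique[OF E has_sum_dyck_words_arch[OF this]]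
  have "?E h = q * ?E (h + 1) + q * c h + q * ?E h"
    by simp
  with p_plus_q show ?thesis
    by algebra
qed

lemma mean_down_cost_eq_sum:
  assumes "\<And>k. \<bar>c k\<bar> \<le> B" and "\<And>k. h + int m \<le> k \<Longrightarrow> c k = 0"
  shows "mean_down_cost p q c h = (\<Sum>k<m. (q / p) ^ Suc k * c (h + int k))"
proof -
  have "mean_down_cost p q c k = q / p * (mean_down_cost p q c (k + 1) + c k)" for k
    using mean_down_cost_recurrence[OF assms(1), where h = k] q_pos q_less_p
    by (simp add: field_simps)
  from backward_recurrence_unroll[where E = "mean_down_cost p q c", OF this, of h m] show ?thesis
    using mean_down_cost_eq_0[where h = "h + int m" and c = c, OF assms(2)] by simp
qed

end

text \<open>The guard \<open>-1 \<le> k\<close> only makes the cost bounded: the walk of \<open>w @ [False]\<close> for a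
  Dyck word \<open>w\<close> never goes below -1.\<close>

definition level_cost :: "nat \<Rightarrow> int \<Rightarrow> real" where
  "level_cost n1 k = (if -1 \<le> k \<and> k < int n1 - 2 then real_of_int (k + 3) else 0)"

lemma Dsum_eq_down_cost:
  assumes "n1 \<ge> 2" "dyck w"
  shows "Dsum n1 (w @ [False]) = down_cost (level_cost n1) 0 w + 2"
proof -
  have "-1 \<le> walk (w @ [False]) i" if "i \<le> length (w @ [False])" for i
  proof (cases "i \<le> length w")
    case True
    with assms(2) show ?thesis
      by (auto simp: dyck_def walk_def)
  next
    case False
    with that have "i = length (w @ [False])"
      by simp
    with assms(2) show ?thesis
      by (simp add: walk_def sum_steps_dyck step_def)
  qed
  then have "Dsum n1 (w @ [False]) = down_cost (level_cost n1) 0 (w @ [False])"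
    unfolding Dsum_def down_cost_eq_sum by (intro sum.cong) (auto simp: level_cost_def)
  also have "\<dots> = down_cost (level_cost n1) 0 w + 2"
    using assms by (simp add: down_cost_append sum_steps_dyck level_cost_def step_def)
  finally show ?thesis .
qed

lemma mean_level_cost:
  fixes p q :: real
  assumes "0 < q" "q < p" "p + q = 1" "n1 \<ge> 2"
  shows "mean_down_cost p q (level_cost n1) 0 = (\<Sum>k<n1 - 2. (q / p) ^ Suc k * (real k + 3))"
proof -
  have "mean_down_cost p q (level_cost n1) 0 =
      (\<Sum>k<n1 - 2. (q / p) ^ Suc k * level_cost n1 (0 + int k))"
    by (rule mean_down_cost_eq_sum[where B = "real n1"])
       (use assms in \<open>auto simp: level_cost_def\<close>)
  also have "\<dots> = (\<Sum>k<n1 - 2. (q / p) ^ Suc k * (real k + 3))"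
    by (intro sum.cong) (auto simp: level_cost_def)
  finally show ?thesis .
qed

theorem proposition10:
  fixes p q :: real and n1 :: nat
  assumes "0 < q" "q < p" "p + q = 1" "n1 \<ge> 2"
  shows "((\<lambda>w'. cond_prob p q w' * Dsum n1 (w' @ [False])) has_sum
          (p / (p - q)^2 * (2*p - q - (p + real n1 * (p - q)) * (q / p) ^ (n1 - 1))))
         {w'. dyck w'}"
proof -
  let ?c = "level_cost n1"
  have "\<bar>?c k\<bar> \<le> real n1" for k
    by (simp add: level_cost_def)
  from has_sum_add[OF has_sum_mean_down_cost[OF assms(1-3) this]
      has_sum_cmult_left[OF has_sum_cond_prob[OF assms(1-3)]]]
  have "((\<lambda>w. cond_prob p q w * down_cost ?c 0 w + cond_prob p q w * 2) has_sum
          mean_down_cost p q ?c 0 + 2) dyck_words"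
    by simp
  then have "((\<lambda>w. cond_prob p q w * Dsum n1 (w @ [False])) has_sum
          mean_down_cost p q ?c 0 + 2) dyck_words"
    by (rule has_sum_cong[THEN iffD1, rotated]) (simp add: Dsum_eq_down_cost[OF assms(4)] distrib_left)
  also have "mean_down_cost p q ?c 0 + 2 =
      p / (p - q)^2 * (2*p - q - (p + real n1 * (p - q)) * (q / p) ^ (n1 - 1))"
    using mean_level_cost[OF assms] weighted_geometric_sum[of p q "n1 - 2"] assms
    by (simp add: Suc_diff_Suc numeral_2_eq_2 add.commute)
  finally show ?thesis .
qed

end
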